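(* Consider the multi-resource General Lotto game with the weighted-contribution winning rule $W_{\mathrm{WC}}$ with weights $\boldsymbol a,\boldsymbol b\in\mathbb R^T_{\ge0}$, budgets $\boldsymbol X,\boldsymbol Y\in\mathbb R^T_{\ge0}$ with $\sum_t a_tX_t>0$, and contest values $\boldsymbol v$. Let $\beta=\frac{\sum_{t}b_tY_t}{\sum_t a_tX_t}$. Then the game has an equilibrium, and in every equilibrium the payoff to player $\mathcal X$ is $L(\beta)$ and the payoff to player $\mathcal Y$ is $1-L(\beta)$.
   Context: Contests $\mathcal C=\{1,\dots,C\}$ with values $v_c>0$, $\sum_cv_c=1$; resource types $\mathcal T=\{1,\dots,T\}$. Pure allocations $\mathbf x=(\boldsymbol x_1,\dots,\boldsymbol x_C)\in\mathbb R_{\ge0}^{CT}$, $\boldsymbol x_c=(x_{c,1},\dots,x_{c,T})$, and similarly $\mathbf y$. Strategy set $\mathbb F(\boldsymbol X)$: probability distributions $F$ on $\mathbb R^{CT}_{\ge0}$ with $\mathbb E_{\mathbf x\sim F}[\sum_cx_{c,t}]\le X_t$ for each $t$; similarly $\mathbb F(\boldsymbol Y)$. Winning rule $W_{\mathrm{WC}}(\boldsymbol x,\boldsymbol y)=1$ if $\sum_ta_tx_t\ge\sum_tb_ty_t$, else $0$. Payoffs $\pi_{\mathcal X}(F_{\mathcal X},F_{\mathcal Y})=\mathbb E[\sum_cv_cW_{\mathrm{WC}}(\boldsymbol x_c,\boldsymbol y_c)]$ with $\mathbf x\sim F_{\mathcal X}$, $\mathbf y\sim F_{\mathcal Y}$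 independent, and $\pi_{\mathcal Y}=1-\pi_{\mathcal X}$. Equilibrium: $(F^*_{\mathcal X},F^*_{\mathcal Y})$ with $\pi_{\mathcal X}(F_{\mathcal X},F^*_{\mathcal Y})\le\pi_{\mathcal X}(F^*_{\mathcal X},F^*_{\mathcal Y})\le\pi_{\mathcal X}(F^*_{\mathcal X},F_{\mathcal Y})$ for all admissible $F_{\mathcal X},F_{\mathcal Y}$. $L(\alpha)=1-\alpha/2$ for $\alpha\le1$ and $L(\alpha)=1/(2\alpha)$ for $\alpha>1$. *)

theory Defs
  imports "HOL-Probability.Probability"
begin

text \<open>Pure allocations of player X (or Y): elements of real^'t^'c, where
  x $ c $ t is the amount of resource type t put on contest c.\<close>

definition W_WC :: "real^'t::finite \<Rightarrow> real^'t \<Rightarrow> real^'t \<Rightarrow> real^'t \<Rightarrow> real" where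
  "W_WC a b x y = (if (\<Sum>t\<in>UNIV. a$t * x$t) \<ge> (\<Sum>t\<in>UNIV. b$t * y$t) then 1 else 0)"

definition strategies :: "real^'t::finite \<Rightarrow> (real^'t^'c::finite) measure set" where
  "strategies X = {F. prob_space F \<and> sets F = sets borel \<and>
      (AE x in F. \<forall>c t. 0 \<le> x$c$t) \<and>
      (\<forall>t. (\<integral>\<^sup>+x. ennreal (\<Sum>c\<in>UNIV. x$c$t) \<partial>F) \<le> ennreal (X$t))}"

definition payoffX :: "('c::finite \<Rightarrow> real) \<Rightarrow> real^'t::finite \<Rightarrow> real^'t \<Rightarrow>
    (real^'t^'c) measure \<Rightarrow> (real^'t^'c) measure \<Rightarrow> real" where
  "payoffX v a b F G =
     (\<integral>z. (\<Sum>c\<in>UNIV. v c * W_WC a b (fst z $ c) (snd z $ c)) \<partial>(F \<Otimes>\<^sub>M G))"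

definition payoffY :: "('c::finite \<Rightarrow> real) \<Rightarrow> real^'t::finite \<Rightarrow> real^'t \<Rightarrow>
    (real^'t^'c) measure \<Rightarrow> (real^'t^'c) measure \<Rightarrow> real" where
  "payoffY v a b F G = 1 - payoffX v a b F G"

definition is_equilibrium :: "('c::finite \<Rightarrow> real) \<Rightarrow> real^'t::finite \<Rightarrow> real^'t \<Rightarrow>
    real^'t \<Rightarrow> real^'t \<Rightarrow> (real^'t^'c) measure \<Rightarrow> (real^'t^'c) measure \<Rightarrow> bool" where
  "is_equilibrium v a b X Y F G \<longleftrightarrow>
     F \<in> strategies X \<and> G \<in> strategies Y \<and>
     (\<forall>F' \<in> strategies X. payoffX v a b F' G \<le> payoffX v a b F G) \<and>
     (\<forall>G' \<in> strategies Y. payoffX v a b F G \<le> payoffX v a b F G')"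

definition L :: "real \<Rightarrow> real" where
  "L \<alpha> = (if \<alpha> \<le> 1 then 1 - \<alpha> / 2 else 1 / (2 * \<alpha>))"

end

theory Submission imports Defs begin

text \<open>Each player spreads a random multiple of its budget over the contests in proportion to
  their values; the multiplier is 0 with probability 1 - g and otherwise uniform on [0, 2/g], so
  its mean is at most 1. Against a pure allocation whose weighted contribution to contest c is s,
  such a strategy of X wins contest c with probability at least g - g^2 s / (2 v_c A), where A is
  X's weighted budget. This bound is affine in the opponent's allocation, so it survives taking
  expectations and X secures g - g^2 B / (2 A) against every strategy of Y with weighted budget B.
  Symmetrically, Y holds X down to 1 - g + g^2 A / (2 B). For g = min 1 (1 / beta) on X's side and
  g = min 1 beta on Y's side both bounds equal L beta, which makes the two strategies a saddle
  point and fixes the value of every equilibrium.\<close>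

lemma borel_measurable_vec_nth[measurable (raw)]:
  "f \<in> borel_measurable M \<Longrightarrow> (\<lambda>x. (f x :: 'a::euclidean_space^'n::finite) $ i) \<in> borel_measurable M"
  by (rule borel_measurable_continuous_on[where f="\<lambda>x. x $ i"]) (auto intro!: continuous_intros)

subsection \<open>The ramp profile\<close>

definition unif01 :: "real measure" where
  "unif01 = uniform_measure lborel {0..1}"

lemma prob_space_unif01: "prob_space unif01"
  unfolding unif01_def by (rule prob_space_uniform_measure) auto

lemma sets_unif01[measurable_cong]: "sets unif01 = sets borel"
  unfolding unif01_def by simp

lemma measure_unif01: "A \<in> sets borel \<Longrightarrow> measure unif01 A = measure lborel ({0..1} \<inter> A)"
  unfolding unif01_def by (subst measure_uniform_measure) auto

lemma measure_unif01_atLeastAtMost_1: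
  assumes "0 \<le> l" "l \<le> 1" shows "measure unif01 {l..1} = 1 - l"
proof -
  have "{0..1} \<inter> {l..1} = {l..(1::real)}" using assms by auto
  then show ?thesis using assms by (simp add: measure_unif01)
qed

lemma measure_unif01_atMost_le:
  assumes "0 \<le> h" shows "measure unif01 {..h} \<le> h"
proof -
  have "{0..1} \<inter> {..h} = {0..min 1 h}" using assms by auto
  then show ?thesis using assms by (simp add: measure_unif01)
qed

lemma integrable_unif01_bounded:
  fixes f :: "real \<Rightarrow> real"
  assumes "f \<in> borel_measurable borel" "\<And>r. \<bar>f r\<bar> \<le> B" shows "integrable unif01 f"
proof -
  interpret prob_space unif01 by (rule prob_space_unif01)
  show ?thesis
    by (rule integrable_const_bound[where B=B])
       (use assms in \<open>auto simp: measurable_cong_sets[OF sets_unif01 refl]\<close>)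
qed

text \<open>Applied to a uniform r, ramp g r is 0 with probability 1 - g and uniform on [0, 2/g]
  otherwise.\<close>

definition ramp :: "real \<Rightarrow> real \<Rightarrow> real" where
  "ramp g r = (2 / g^2) * max 0 (r - (1 - g))"

lemma continuous_on_ramp: "continuous_on UNIV (ramp g)"
  unfolding ramp_def by (intro continuous_intros)

lemma borel_measurable_ramp[measurable (raw)]:
  "f \<in> borel_measurable M \<Longrightarrow> (\<lambda>x. ramp g (f x)) \<in> borel_measurable M"
  by (erule measurable_compose[OF _ borel_measurable_continuous_onI[OF continuous_on_ramp]])

lemma ramp_nonneg: "0 \<le> ramp g r"
  unfolding ramp_def by simp

lemma nn_integral_ramp_le_1:
  assumes "0 \<le> g" "g \<le> 1" shows "(\<integral>\<^sup>+r. ennreal (ramp g r) \<partial>unif01) \<le> 1"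
proof (cases "g = 0")
  case True then show ?thesis by (simp add: ramp_def)
next
  case False
  with assms have g: "0 < g" by simp
  have "(\<integral>\<^sup>+r. ennreal (ramp g r) \<partial>unif01)
      = (\<integral>\<^sup>+r. ennreal (ramp g r) * indicator {0..1} r \<partial>lborel) / emeasure lborel {0..1::real}"
    unfolding unif01_def by (rule nn_integral_uniform_measure) auto
  also have "\<dots> = (\<integral>\<^sup>+r. ennreal ((2 / g^2) * (r - (1 - g))) * indicator {1-g..1} r \<partial>lborel)"
    using assms unfolding ramp_def
    by (simp add: divide_ennreal_def, intro nn_integral_cong) (auto split: split_indicator simp: max_def)
  also have "\<dots> = ennreal ((1 - (1-g))^2 / g^2 - ((1-g) - (1-g))^2 / g^2)"
    by (rule nn_integral_FTC_Icc[where F="\<lambda>r. (r - (1-g))^2 / g^2"])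
       (use g in \<open>auto intro!: derivative_eq_intros simp: field_simps power2_eq_square\<close>)
  also have "\<dots> = 1" using g by simp
  finally show ?thesis by simp
qed

lemma prob_ramp_ge:
  assumes "0 < g" "g \<le> 1" "0 \<le> s"
  shows "g - g^2 * s / 2 \<le> (\<integral>r. (if s \<le> ramp g r then 1 else 0) \<partial>unif01)"
proof -
  interpret prob_space unif01 by (rule prob_space_unif01)
  define l where "l = 1 - g + g^2 * s / 2"
  have "0 \<le> l" unfolding l_def using assms by auto
  show ?thesis
  proof (cases "l \<le> 1")
    case True
    have "indicator {l..1} r \<le> (if s \<le> ramp g r then 1 else 0::real)" for r
    proof (cases "r \<in> {l..1}")
      case True
      then have "g^2 * s / 2 \<le> r - (1 - g)" unfolding l_def by auto
      then have "g^2 * s / 2 \<le> max 0 (r - (1 - g))" by linarith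
      then have "(2 / g^2) * (g^2 * s / 2) \<le> ramp g r"
        unfolding ramp_def using assms by (intro mult_left_mono) auto
      then show ?thesis using True assms by simp
    qed simp
    then have "(\<integral>r. indicator {l..1} r \<partial>unif01) \<le> (\<integral>r. (if s \<le> ramp g r then 1 else 0::real) \<partial>unif01)"
      by (intro integral_mono integrable_unif01_bounded[where B=1]) (auto split: split_indicator)
    then show ?thesis
      using measure_unif01_atLeastAtMost_1[OF \<open>0 \<le> l\<close> True] unfolding l_def by simp
  next
    case False
    have "0 \<le> (\<integral>r. (if s \<le> ramp g r then 1 else 0::real) \<partial>unif01)"
      by (intro integral_nonneg_AE) auto
    then show ?thesis using False unfolding l_def by linarith
  qed
qed

lemma prob_ramp_le:
  assumes "0 < g" "g \<le> 1" "0 \<le> s"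
  shows "(\<integral>r. (if ramp g r \<le> s then 1 else 0) \<partial>unif01) \<le> 1 - g + g^2 * s / 2"
proof -
  interpret prob_space unif01 by (rule prob_space_unif01)
  define h where "h = 1 - g + g^2 * s / 2"
  have "0 \<le> h" unfolding h_def using assms by auto
  have "(if ramp g r \<le> s then 1 else 0::real) \<le> indicator {..h} r" for r
  proof (cases "ramp g r \<le> s")
    case True
    then have "(2 / g^2) * max 0 (r - (1 - g)) \<le> s" unfolding ramp_def .
    then have "max 0 (r - (1 - g)) \<le> g^2 * s / 2"
      using assms by (simp add: field_simps)
    then have "r \<le> h" unfolding h_def by linarith
    then show ?thesis using True by simp
  qed simp
  then have "(\<integral>r. (if ramp g r \<le> s then 1 else 0::real) \<partial>unif01) \<le> (\<integral>r. indicator {..h} r \<partial>unif01)"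
    by (intro integral_mono integrable_unif01_bounded[where B=1]) (auto split: split_indicator)
  also have "\<dots> \<le> h" using measure_unif01_atMost_le[OF \<open>0 \<le> h\<close>] by simp
  finally show ?thesis unfolding h_def .
qed

definition ramp_strategy :: "('c::finite \<Rightarrow> real) \<Rightarrow> real^'t::finite \<Rightarrow> real \<Rightarrow> (real^'t^'c) measure" where
  "ramp_strategy v Z g = distr unif01 borel (\<lambda>r. \<chi> c t. Z$t * (v c * ramp g r))"

lemma measurable_ramp_allocation:
  "(\<lambda>r. \<chi> c t. (Z::real^'t::finite)$t * (v (c::'c::finite) * ramp g r)) \<in> measurable unif01 borel"
  unfolding measurable_cong_sets[OF sets_unif01 refl] ramp_def
  by (intro borel_measurable_continuous_onI continuous_intros)

lemma sets_ramp_strategy[simp]: "sets (ramp_strategy v Z g) = sets borel"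
  unfolding ramp_strategy_def by simp

lemma integral_ramp_strategy:
  fixes f :: "real^'t::finite^'c::finite \<Rightarrow> real"
  shows "f \<in> borel_measurable borel \<Longrightarrow>
   (\<integral>x. f x \<partial>ramp_strategy v Z g) = (\<integral>r. f (\<chi> c t. Z$t * (v c * ramp g r)) \<partial>unif01)"
  unfolding ramp_strategy_def by (rule integral_distr[OF measurable_ramp_allocation])

lemma weighted_contribution_ramp_allocation:
  "(\<Sum>t\<in>UNIV. w$t * (\<chi> c t. Z$t * (v c * ramp g r)) $ c $ t) = (\<Sum>t\<in>UNIV. w$t * Z$t) * (v c * ramp g r)"
  by (simp add: sum_distrib_right mult.assoc)

lemma prob_space_ramp_strategy: "prob_space (ramp_strategy v Z g)"
  unfolding ramp_strategy_def
  by (rule prob_space.prob_space_distr[OF prob_space_unif01 measurable_ramp_allocation])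

lemma ramp_strategy_in_strategies:
  fixes v :: "'c::finite \<Rightarrow> real" and Z :: "real^'t::finite"
  assumes Z: "\<forall>t. 0 \<le> Z$t" and v: "\<forall>c. 0 < v c" "(\<Sum>c\<in>UNIV. v c) = 1"
    and g: "0 \<le> g" "g \<le> 1"
  shows "ramp_strategy v Z g \<in> strategies Z"
  unfolding strategies_def
proof (intro CollectI conjI allI)
  show "prob_space (ramp_strategy v Z g)" by (rule prob_space_ramp_strategy)
  show "AE x in ramp_strategy v Z g. \<forall>c t. 0 \<le> x $ c $ t"
    unfolding ramp_strategy_def AE_distr_iff[OF measurable_ramp_allocation, of "\<lambda>x. \<forall>c t. 0 \<le> x $ c $ t", simplified]
    using Z v by (auto intro!: AE_I2 mult_nonneg_nonneg ramp_nonneg simp: less_imp_le)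
  fix t
  have "(\<integral>\<^sup>+ x. ennreal (\<Sum>c\<in>UNIV. x $ c $ t) \<partial>ramp_strategy v Z g)
      = (\<integral>\<^sup>+ r. ennreal (\<Sum>c\<in>UNIV. Z$t * (v c * ramp g r)) \<partial>unif01)"
    unfolding ramp_strategy_def by (subst nn_integral_distr[OF measurable_ramp_allocation]) auto
  also have "\<dots> = (\<integral>\<^sup>+ r. ennreal (Z$t) * ennreal (ramp g r) \<partial>unif01)"
  proof (intro nn_integral_cong)
    fix r
    have "(\<Sum>c\<in>UNIV. Z$t * (v c * ramp g r)) = Z$t * ramp g r * (\<Sum>c\<in>UNIV. v c)"
      by (simp add: sum_distrib_left sum_distrib_right mult_ac)
    then show "ennreal (\<Sum>c\<in>UNIV. Z$t * (v c * ramp g r)) = ennreal (Z$t) * ennreal (ramp g r)"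
      using v Z by (simp add: ennreal_mult ramp_nonneg)
  qed
  also have "\<dots> = ennreal (Z$t) * (\<integral>\<^sup>+ r. ennreal (ramp g r) \<partial>unif01)"
    by (rule nn_integral_cmult) (simp add: measurable_cong_sets[OF sets_unif01 refl])
  also have "\<dots> \<le> ennreal (Z$t)"
    using mult_left_mono[OF nn_integral_ramp_le_1[OF g], of "ennreal (Z$t)"] by simp
  finally show "(\<integral>\<^sup>+ x. ennreal (\<Sum>c\<in>UNIV. x $ c $ t) \<partial>ramp_strategy v Z g) \<le> ennreal (Z$t)" .
qed simp

definition pure_payoff :: "('c::finite \<Rightarrow> real) \<Rightarrow> real^'t::finite \<Rightarrow> real^'t \<Rightarrow> real^'t^'c \<Rightarrow> real^'t^'c \<Rightarrow> real" where
  "pure_payoff v a b x y = (\<Sum>c\<in>UNIV. v c * W_WC a b (x$c) (y$c))"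

lemma borel_measurable_pure_payoff_pair:
  "(\<lambda>p. pure_payoff v a b (fst p) (snd p)) \<in> borel_measurable (borel \<Otimes>\<^sub>M borel)"
  unfolding pure_payoff_def W_WC_def by measurable

lemma borel_measurable_pure_payoff[measurable (raw)]:
  "f \<in> borel_measurable M \<Longrightarrow> g \<in> borel_measurable M \<Longrightarrow>
   (\<lambda>z. pure_payoff v a b (f z) (g z)) \<in> borel_measurable M"
  using measurable_compose[OF measurable_Pair borel_measurable_pure_payoff_pair] by simp

lemma pure_payoff_bounds:
  assumes "\<forall>c. 0 \<le> v c"
  shows "0 \<le> pure_payoff v a b x y" "pure_payoff v a b x y \<le> (\<Sum>c\<in>UNIV. v c)"
  using assms unfolding pure_payoff_def W_WC_def by (auto intro!: sum_nonneg sum_mono)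

lemma payoffX_iterated:
  fixes F G :: "(real^'t::finite^'c::finite) measure"
  assumes "prob_space F" "prob_space G"
    and [measurable_cong]: "sets F = sets borel" "sets G = sets borel"
    and v: "\<forall>c. 0 \<le> v c"
  shows "payoffX v a b F G = (\<integral>y. (\<integral>x. pure_payoff v a b x y \<partial>F) \<partial>G)"
    and "payoffX v a b F G = (\<integral>x. (\<integral>y. pure_payoff v a b x y \<partial>G) \<partial>F)"
    and "integrable G (\<lambda>y. \<integral>x. pure_payoff v a b x y \<partial>F)"
    and "integrable F (\<lambda>x. \<integral>y. pure_payoff v a b x y \<partial>G)"
proof -
  interpret F: prob_space F by fact
  interpret G: prob_space G by fact
  interpret P: pair_prob_space F G ..
  have int: "integrable (F \<Otimes>\<^sub>M G) (\<lambda>(x,y). pure_payoff v a b x y)"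
    by (rule P.integrable_const_bound[where B="\<Sum>c\<in>UNIV. v c"])
       (auto simp: split_beta' abs_of_nonneg pure_payoff_bounds[OF v] intro!: AE_I2)
  have eq: "payoffX v a b F G = integral\<^sup>L (F \<Otimes>\<^sub>M G) (\<lambda>(x,y). pure_payoff v a b x y)"
    unfolding payoffX_def pure_payoff_def by (simp add: split_beta')
  show "payoffX v a b F G = (\<integral>y. (\<integral>x. pure_payoff v a b x y \<partial>F) \<partial>G)"
    unfolding eq P.integral_snd[OF int] ..
  show "payoffX v a b F G = (\<integral>x. (\<integral>y. pure_payoff v a b x y \<partial>G) \<partial>F)"
    unfolding eq P.integral_fst[OF int] ..
  show "integrable G (\<lambda>y. \<integral>x. pure_payoff v a b x y \<partial>F)" by (rule P.integrable_snd[OF int])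
  show "integrable F (\<lambda>x. \<integral>y. pure_payoff v a b x y \<partial>G)" by (rule P.integrable_fst[OF int])
qed

lemma payoffX_le_sum_values:
  fixes F G :: "(real^'t::finite^'c::finite) measure"
  assumes "prob_space F" "prob_space G" "sets F = sets borel" "sets G = sets borel"
    and v: "\<forall>c. 0 \<le> v c"
  shows "payoffX v a b F G \<le> (\<Sum>c\<in>UNIV. v c)"
proof -
  interpret F: prob_space F by fact
  interpret G: prob_space G by fact
  have "(\<integral>y. pure_payoff v a b x y \<partial>G) \<le> (\<Sum>c\<in>UNIV. v c)" for x
    using assms(4)
    by (intro G.integral_le_const G.integrable_const_bound[where B="\<Sum>c\<in>UNIV. v c"])
       (auto simp: abs_of_nonneg pure_payoff_bounds[OF v] intro!: AE_I2)
  then show ?thesis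
    unfolding payoffX_iterated(2)[OF assms]
    by (intro F.integral_le_const payoffX_iterated(4)[OF assms] AE_I2)
qed

subsection \<open>Guarantees against mixed strategies\<close>

lemma weighted_total_expectation:
  fixes G :: "(real^'t::finite^'c::finite) measure"
  assumes G: "G \<in> strategies Y" and Y: "\<forall>t. 0 \<le> Y$t" and b: "\<forall>t. 0 \<le> b$t"
  shows "integrable G (\<lambda>y. \<Sum>c\<in>UNIV. \<Sum>t\<in>UNIV. b$t * y$c$t)"
    and "(\<integral>y. (\<Sum>c\<in>UNIV. \<Sum>t\<in>UNIV. b$t * y$c$t) \<partial>G) \<le> (\<Sum>t\<in>UNIV. b$t * Y$t)"
proof -
  have [measurable_cong]: "sets G = sets borel"
    and ae: "AE y in G. \<forall>c t. 0 \<le> y$c$t"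
    and budget: "\<And>t. (\<integral>\<^sup>+y. ennreal (\<Sum>c\<in>UNIV. y$c$t) \<partial>G) \<le> ennreal (Y$t)"
    using G unfolding strategies_def by auto
  have resource: "integrable G (\<lambda>y. \<Sum>c\<in>UNIV. y$c$t) \<and> (\<integral>y. (\<Sum>c\<in>UNIV. y$c$t) \<partial>G) \<le> Y$t" for t
  proof
    have nn: "AE y in G. 0 \<le> (\<Sum>c\<in>UNIV. y$c$t)"
      using ae by eventually_elim (auto intro!: sum_nonneg)
    show int: "integrable G (\<lambda>y. \<Sum>c\<in>UNIV. y$c$t)"
      by (rule integrableI_nonneg) (use nn le_less_trans[OF budget[of t]] in auto)
    have "ennreal (\<integral>y. (\<Sum>c\<in>UNIV. y$c$t) \<partial>G) \<le> ennreal (Y$t)"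
      using nn_integral_eq_integral[OF int nn] budget[of t] by simp
    then show "(\<integral>y. (\<Sum>c\<in>UNIV. y$c$t) \<partial>G) \<le> Y$t" using Y by (simp add: ennreal_le_iff)
  qed
  have swap: "(\<lambda>y. \<Sum>c\<in>UNIV. \<Sum>t\<in>UNIV. b$t * y$c$t) = (\<lambda>y. \<Sum>t\<in>UNIV. b$t * (\<Sum>c\<in>UNIV. y$c$t))"
    by (auto simp: sum_distrib_left intro!: sum.swap)
  show "integrable G (\<lambda>y. \<Sum>c\<in>UNIV. \<Sum>t\<in>UNIV. b$t * y$c$t)"
    unfolding swap using resource by auto
  have "(\<integral>y. (\<Sum>c\<in>UNIV. \<Sum>t\<in>UNIV. b$t * y$c$t) \<partial>G) = (\<Sum>t\<in>UNIV. b$t * (\<integral>y. (\<Sum>c\<in>UNIV. y$c$t) \<partial>G))"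
    unfolding swap using resource by (subst Bochner_Integration.integral_sum) auto
  also have "\<dots> \<le> (\<Sum>t\<in>UNIV. b$t * Y$t)"
    using resource b by (intro sum_mono mult_left_mono) auto
  finally show "(\<integral>y. (\<Sum>c\<in>UNIV. \<Sum>t\<in>UNIV. b$t * y$c$t) \<partial>G) \<le> (\<Sum>t\<in>UNIV. b$t * Y$t)" .
qed

lemma payoffX_ge_of_pure_guarantee:
  fixes F G :: "(real^'t::finite^'c::finite) measure"
  assumes G: "G \<in> strategies Y" and Y: "\<forall>t. 0 \<le> Y$t" and b: "\<forall>t. 0 \<le> b$t"
    and F: "prob_space F" "sets F = sets borel" and v: "\<forall>c. 0 \<le> v c" and q: "0 \<le> q"
    and guarantee: "\<And>y. \<forall>c t. 0 \<le> y$c$t \<Longrightarrow>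
      p - q * (\<Sum>c\<in>UNIV. \<Sum>t\<in>UNIV. b$t * y$c$t) \<le> (\<integral>x. pure_payoff v a b x y \<partial>F)"
  shows "p - q * (\<Sum>t\<in>UNIV. b$t * Y$t) \<le> payoffX v a b F G"
proof -
  have pG: "prob_space G" and sG: "sets G = sets borel" and ae: "AE y in G. \<forall>c t. 0 \<le> y$c$t"
    using G unfolding strategies_def by auto
  interpret G: prob_space G by fact
  note total = weighted_total_expectation[OF G Y b]
  note iterated = payoffX_iterated[OF F(1) pG F(2) sG v, of a b]
  have "p - q * (\<Sum>t\<in>UNIV. b$t * Y$t) \<le> p - q * (\<integral>y. (\<Sum>c\<in>UNIV. \<Sum>t\<in>UNIV. b$t * y$c$t) \<partial>G)"
    using total(2) q by (simp add: mult_left_mono)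
  also have "\<dots> = (\<integral>y. p - q * (\<Sum>c\<in>UNIV. \<Sum>t\<in>UNIV. b$t * y$c$t) \<partial>G)"
    using total(1) by (simp add: G.prob_space)
  also have "\<dots> \<le> (\<integral>y. (\<integral>x. pure_payoff v a b x y \<partial>F) \<partial>G)"
    using total(1) iterated(3) ae[THEN AE_mp, OF AE_I2[OF impI[OF guarantee]]]
    by (intro integral_mono_AE) auto
  also have "\<dots> = payoffX v a b F G" using iterated(1) by simp
  finally show ?thesis .
qed

lemma payoffX_le_of_pure_guarantee:
  fixes F G :: "(real^'t::finite^'c::finite) measure"
  assumes F: "F \<in> strategies X" and X: "\<forall>t. 0 \<le> X$t" and a: "\<forall>t. 0 \<le> a$t"
    and G: "prob_space G" "sets G = sets borel" and v: "\<forall>c. 0 \<le> v c" and q: "0 \<le> q"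
    and guarantee: "\<And>x. \<forall>c t. 0 \<le> x$c$t \<Longrightarrow>
      (\<integral>y. pure_payoff v a b x y \<partial>G) \<le> p + q * (\<Sum>c\<in>UNIV. \<Sum>t\<in>UNIV. a$t * x$c$t)"
  shows "payoffX v a b F G \<le> p + q * (\<Sum>t\<in>UNIV. a$t * X$t)"
proof -
  have pF: "prob_space F" and sF: "sets F = sets borel" and ae: "AE x in F. \<forall>c t. 0 \<le> x$c$t"
    using F unfolding strategies_def by auto
  interpret F: prob_space F by fact
  note total = weighted_total_expectation[OF F X a]
  note iterated = payoffX_iterated[OF pF G(1) sF G(2) v, of a b]
  have "payoffX v a b F G = (\<integral>x. (\<integral>y. pure_payoff v a b x y \<partial>G) \<partial>F)" using iterated(2) by simp
  also have "\<dots> \<le> (\<integral>x. p + q * (\<Sum>c\<in>UNIV. \<Sum>t\<in>UNIV. a$t * x$c$t) \<partial>F)"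
    using total(1) iterated(4) ae[THEN AE_mp, OF AE_I2[OF impI[OF guarantee]]]
    by (intro integral_mono_AE) auto
  also have "\<dots> = p + q * (\<integral>x. (\<Sum>c\<in>UNIV. \<Sum>t\<in>UNIV. a$t * x$c$t) \<partial>F)"
    using total(1) by (simp add: F.prob_space)
  also have "\<dots> \<le> p + q * (\<Sum>t\<in>UNIV. a$t * X$t)"
    using total(2) q by (simp add: mult_left_mono)
  finally show ?thesis .
qed

lemma integral_pure_payoff_ramp_strategy_ge:
  fixes v :: "'c::finite \<Rightarrow> real" and Z a b :: "real^'t::finite" and y :: "real^'t^'c"
  assumes v: "\<forall>c. 0 < v c" "(\<Sum>c\<in>UNIV. v c) = 1" and g: "0 < g" "g \<le> 1"
    and K: "0 < (\<Sum>t\<in>UNIV. a$t * Z$t)" and y: "\<forall>c t. 0 \<le> y$c$t" and b: "\<forall>t. 0 \<le> b$t"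
  shows "g - g^2 / (2 * (\<Sum>t\<in>UNIV. a$t * Z$t)) * (\<Sum>c\<in>UNIV. \<Sum>t\<in>UNIV. b$t * y$c$t)
    \<le> (\<integral>x. pure_payoff v a b x y \<partial>ramp_strategy v Z g)"
proof -
  define A where "A = (\<Sum>t\<in>UNIV. a$t * Z$t)"
  define s where "s c = (\<Sum>t\<in>UNIV. b$t * y$c$t) / (A * v c)" for c
  have s: "0 \<le> s c" for c
    unfolding s_def A_def using y b v K
    by (auto intro!: divide_nonneg_pos sum_nonneg mult_pos_pos mult_nonneg_nonneg)
  have "(\<Sum>t\<in>UNIV. b$t * y$c$t) \<le> A * (v c * ramp g r) \<longleftrightarrow> s c \<le> ramp g r" for c r
    unfolding s_def A_def using v K by (simp add: pos_divide_le_eq mult_ac)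
  then have payoff: "pure_payoff v a b (\<chi> c t. Z$t * (v c * ramp g r)) y
      = (\<Sum>c\<in>UNIV. v c * (if s c \<le> ramp g r then 1 else 0))" for r
    unfolding pure_payoff_def W_WC_def weighted_contribution_ramp_allocation A_def[symmetric]
    by simp
  have "v c * (g - g^2 * s c / 2) = v c * g - g^2 / (2 * A) * (\<Sum>t\<in>UNIV. b$t * y$c$t)" for c
    using v(1)[THEN spec, of c] unfolding s_def by (simp add: field_simps)
  then have "g - g^2 / (2 * A) * (\<Sum>c\<in>UNIV. \<Sum>t\<in>UNIV. b$t * y$c$t)
      = (\<Sum>c\<in>UNIV. v c * (g - g^2 * s c / 2))"
    using v(2) by (simp add: sum_subtractf sum_distrib_left sum_distrib_right[symmetric])
  also have "\<dots> \<le> (\<Sum>c\<in>UNIV. v c * (\<integral>r. (if s c \<le> ramp g r then 1 else 0) \<partial>unif01))"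
    using v g s by (intro sum_mono mult_left_mono prob_ramp_ge) (auto simp: less_imp_le)
  also have "\<dots> = (\<integral>r. pure_payoff v a b (\<chi> c t. Z$t * (v c * ramp g r)) y \<partial>unif01)"
    unfolding payoff
    by (subst Bochner_Integration.integral_sum) (auto intro!: integrable_unif01_bounded[where B=1])
  also have "\<dots> = (\<integral>x. pure_payoff v a b x y \<partial>ramp_strategy v Z g)"
    by (rule integral_ramp_strategy[symmetric]) measurable
  finally show ?thesis unfolding A_def .
qed

lemma integral_pure_payoff_ramp_strategy_le:
  fixes v :: "'c::finite \<Rightarrow> real" and Z a b :: "real^'t::finite" and x :: "real^'t^'c"
  assumes v: "\<forall>c. 0 < v c" "(\<Sum>c\<in>UNIV. v c) = 1" and g: "0 < g" "g \<le> 1"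
    and K: "0 < (\<Sum>t\<in>UNIV. b$t * Z$t)" and x: "\<forall>c t. 0 \<le> x$c$t" and a: "\<forall>t. 0 \<le> a$t"
  shows "(\<integral>y. pure_payoff v a b x y \<partial>ramp_strategy v Z g)
    \<le> 1 - g + g^2 / (2 * (\<Sum>t\<in>UNIV. b$t * Z$t)) * (\<Sum>c\<in>UNIV. \<Sum>t\<in>UNIV. a$t * x$c$t)"
proof -
  define B where "B = (\<Sum>t\<in>UNIV. b$t * Z$t)"
  define s where "s c = (\<Sum>t\<in>UNIV. a$t * x$c$t) / (B * v c)" for c
  have s: "0 \<le> s c" for c
    unfolding s_def B_def using x a v K
    by (auto intro!: divide_nonneg_pos sum_nonneg mult_pos_pos mult_nonneg_nonneg)
  have "B * (v c * ramp g r) \<le> (\<Sum>t\<in>UNIV. a$t * x$c$t) \<longleftrightarrow> ramp g r \<le> s c" for c r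
    unfolding s_def B_def using v K by (simp add: pos_le_divide_eq mult_ac)
  then have payoff: "pure_payoff v a b x (\<chi> c t. Z$t * (v c * ramp g r))
      = (\<Sum>c\<in>UNIV. v c * (if ramp g r \<le> s c then 1 else 0))" for r
    unfolding pure_payoff_def W_WC_def weighted_contribution_ramp_allocation B_def[symmetric]
    by simp
  have "(\<integral>y. pure_payoff v a b x y \<partial>ramp_strategy v Z g)
      = (\<integral>r. pure_payoff v a b x (\<chi> c t. Z$t * (v c * ramp g r)) \<partial>unif01)"
    by (rule integral_ramp_strategy) measurable
  also have "\<dots> = (\<Sum>c\<in>UNIV. v c * (\<integral>r. (if ramp g r \<le> s c then 1 else 0) \<partial>unif01))"
    unfolding payoff
    by (subst Bochner_Integration.integral_sum) (auto intro!: integrable_unif01_bounded[where B=1])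
  also have "\<dots> \<le> (\<Sum>c\<in>UNIV. v c * (1 - g + g^2 * s c / 2))"
    using v g s by (intro sum_mono mult_left_mono prob_ramp_le) (auto simp: less_imp_le)
  also have "\<dots> = 1 - g + g^2 / (2 * B) * (\<Sum>c\<in>UNIV. \<Sum>t\<in>UNIV. a$t * x$c$t)"
  proof -
    have "v c * (1 - g + g^2 * s c / 2) = v c * (1 - g) + g^2 / (2 * B) * (\<Sum>t\<in>UNIV. a$t * x$c$t)" for c
      using v(1)[THEN spec, of c] unfolding s_def by (simp add: field_simps)
    then show ?thesis
      using v(2) by (simp add: sum.distrib sum_distrib_left sum_distrib_right[symmetric])
  qed
  finally show ?thesis unfolding B_def .
qed

text \<open>Each share g optimises its own guarantee over (0, 1]: g - g^2 beta / 2 for X and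
  1 - g + g^2 / (2 beta) for Y. X's share is written with an if rather than min 1 (1 / beta)
  because 1 / 0 = 0.\<close>

lemma payoffX_ramp_strategy_ge_L:
  fixes v :: "'c::finite \<Rightarrow> real" and a b X Y :: "real^'t::finite"
  assumes v: "\<forall>c. 0 < v c" "(\<Sum>c\<in>UNIV. v c) = 1" and b: "\<forall>t. 0 \<le> b$t" and Y: "\<forall>t. 0 \<le> Y$t"
    and A: "0 < (\<Sum>t\<in>UNIV. a$t * X$t)" and G: "G \<in> strategies Y"
  defines "\<beta> \<equiv> (\<Sum>t\<in>UNIV. b$t * Y$t) / (\<Sum>t\<in>UNIV. a$t * X$t)"
  shows "L \<beta> \<le> payoffX v a b (ramp_strategy v X (if \<beta> \<le> 1 then 1 else 1 / \<beta>)) G"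
proof -
  define g where "g = (if \<beta> \<le> 1 then 1 else 1 / \<beta>)"
  have "0 < g" "g \<le> 1" unfolding g_def by auto
  have "g - g^2 / (2 * (\<Sum>t\<in>UNIV. a$t * X$t)) * (\<Sum>t\<in>UNIV. b$t * Y$t) \<le> payoffX v a b (ramp_strategy v X g) G"
    using v \<open>0 < g\<close> \<open>g \<le> 1\<close> A b
    by (intro payoffX_ge_of_pure_guarantee[OF G Y b] prob_space_ramp_strategy
          integral_pure_payoff_ramp_strategy_ge) (auto simp: less_imp_le)
  moreover have "g - g^2 / (2 * (\<Sum>t\<in>UNIV. a$t * X$t)) * (\<Sum>t\<in>UNIV. b$t * Y$t) = L \<beta>"
    using A unfolding g_def L_def \<beta>_def by (auto simp: field_simps power2_eq_square)
  ultimately show ?thesis unfolding g_def by simp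
qed

lemma payoffX_ramp_strategy_le_L:
  fixes v :: "'c::finite \<Rightarrow> real" and a b X Y :: "real^'t::finite"
  assumes v: "\<forall>c. 0 < v c" "(\<Sum>c\<in>UNIV. v c) = 1" and a: "\<forall>t. 0 \<le> a$t" and b: "\<forall>t. 0 \<le> b$t"
    and X: "\<forall>t. 0 \<le> X$t" and Y: "\<forall>t. 0 \<le> Y$t"
    and A: "0 < (\<Sum>t\<in>UNIV. a$t * X$t)" and F: "F \<in> strategies X"
  defines "\<beta> \<equiv> (\<Sum>t\<in>UNIV. b$t * Y$t) / (\<Sum>t\<in>UNIV. a$t * X$t)"
  shows "payoffX v a b F (ramp_strategy v Y (min 1 \<beta>)) \<le> L \<beta>"
proof -
  define B where "B = (\<Sum>t\<in>UNIV. b$t * Y$t)"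
  have "0 \<le> B" unfolding B_def using b Y by (auto intro!: sum_nonneg)
  have pF: "prob_space F" "sets F = sets borel" using F unfolding strategies_def by auto
  show ?thesis
  proof (cases "B = 0")
    case True
    then have "L \<beta> = 1" unfolding \<beta>_def B_def[symmetric] L_def by simp
    then show ?thesis
      using payoffX_le_sum_values[OF pF(1) prob_space_ramp_strategy pF(2), where v=v] v by (simp add: less_imp_le)
  next
    case False
    with \<open>0 \<le> B\<close> A have "0 < \<beta>" unfolding \<beta>_def B_def by simp
    define g where "g = min 1 \<beta>"
    have "0 < g" "g \<le> 1" unfolding g_def using \<open>0 < \<beta>\<close> by auto
    have "payoffX v a b F (ramp_strategy v Y g) \<le> 1 - g + g^2 / (2 * B) * (\<Sum>t\<in>UNIV. a$t * X$t)"
      using v \<open>0 < g\<close> \<open>g \<le> 1\<close> False \<open>0 \<le> B\<close> a unfolding B_def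
      by (intro payoffX_le_of_pure_guarantee[OF F X a] prob_space_ramp_strategy
            integral_pure_payoff_ramp_strategy_le) (auto simp: less_imp_le)
    moreover have "1 - g + g^2 / (2 * B) * (\<Sum>t\<in>UNIV. a$t * X$t) = L \<beta>"
      using A \<open>0 < \<beta>\<close> unfolding g_def L_def \<beta>_def B_def[symmetric]
      by (auto simp: field_simps power2_eq_square min_def)
    ultimately show ?thesis unfolding g_def by simp
  qed
qed

lemma is_equilibrium_of_guarantees:
  assumes "F\<^sub>0 \<in> strategies X" "G\<^sub>0 \<in> strategies Y"
    and "\<forall>G \<in> strategies Y. V \<le> payoffX v a b F\<^sub>0 G" "\<forall>F \<in> strategies X. payoffX v a b F G\<^sub>0 \<le> V"
  shows "is_equilibrium v a b X Y F\<^sub>0 G\<^sub>0"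
  using assms unfolding is_equilibrium_def by (meson order_trans)

lemma equilibrium_payoff_eq_guaranteed_value:
  assumes "F\<^sub>0 \<in> strategies X" "G\<^sub>0 \<in> strategies Y"
    and "\<forall>G \<in> strategies Y. V \<le> payoffX v a b F\<^sub>0 G" "\<forall>F \<in> strategies X. payoffX v a b F G\<^sub>0 \<le> V"
    and "is_equilibrium v a b X Y F G"
  shows "payoffX v a b F G = V"
  using assms unfolding is_equilibrium_def by (meson order_antisym order_trans)

theorem proposition1:
  fixes v :: "'c::finite \<Rightarrow> real" and a b X Y :: "real^'t::finite"
  assumes "\<forall>c. v c > 0" and "(\<Sum>c\<in>UNIV. v c) = 1"
    and "\<forall>t. 0 \<le> a$t" and "\<forall>t. 0 \<le> b$t"
    and "\<forall>t. 0 \<le> X$t" and "\<forall>t. 0 \<le> Y$t"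
    and "(\<Sum>t\<in>UNIV. a$t * X$t) > 0"
  defines "\<beta> \<equiv> (\<Sum>t\<in>UNIV. b$t * Y$t) / (\<Sum>t\<in>UNIV. a$t * X$t)"
  shows "(\<exists>F G. is_equilibrium v a b X Y F G) \<and>
         (\<forall>F G. is_equilibrium v a b X Y F G \<longrightarrow>
             payoffX v a b F G = L \<beta> \<and> payoffY v a b F G = 1 - L \<beta>)"
proof -
  define F\<^sub>0 where "F\<^sub>0 = ramp_strategy v X (if \<beta> \<le> 1 then 1 else 1 / \<beta>)"
  define G\<^sub>0 where "G\<^sub>0 = ramp_strategy v Y (min 1 \<beta>)"
  have "0 \<le> \<beta>" unfolding \<beta>_def using assms by (auto intro!: divide_nonneg_pos sum_nonneg)
  have strategies: "F\<^sub>0 \<in> strategies X" "G\<^sub>0 \<in> strategies Y"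
    unfolding F\<^sub>0_def G\<^sub>0_def using assms \<open>0 \<le> \<beta>\<close> by (auto intro!: ramp_strategy_in_strategies)
  have guarantees: "\<forall>G \<in> strategies Y. L \<beta> \<le> payoffX v a b F\<^sub>0 G"
    "\<forall>F \<in> strategies X. payoffX v a b F G\<^sub>0 \<le> L \<beta>"
    using payoffX_ramp_strategy_ge_L[OF assms(1,2,4,6,7)] payoffX_ramp_strategy_le_L[OF assms(1-7)]
    unfolding F\<^sub>0_def G\<^sub>0_def \<beta>_def by auto
  show ?thesis
    using is_equilibrium_of_guarantees[OF strategies guarantees]
      equilibrium_payoff_eq_guaranteed_value[OF strategies guarantees]
    by (auto simp: payoffY_def)
qed

end
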